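(* Let $G$ be a finitely generated group, $X,Y$ uniform spaces, $\mu$ a Borel measure on $X$, and let $\Phi\in Act(G,X)$ and $\Psi\in Act(G,Y)$ be uniformly conjugate via a uniform equivalence $h:X\to Y$ (i.e. $h\circ\Phi_g=\Psi_g\circ h$ for all $g\in G$). Let $h^*(\mu)$ be the measure on $Y$ given by $h^*(\mu)(A)=\mu(h^{-1}(A))$. Then: (i) if $\Phi$ has $\mu$-shadowing, $\Psi$ has $h^*(\mu)$-shadowing; (ii) if $\Phi$ is $\mu$-expansive, $\Psi$ is $h^*(\mu)$-expansive; (iii) if $\Phi$ is $\mu$-persistent, $\Psi$ is $h^*(\mu)$-persistent; (iv) if $\Phi$ is $\mu$-topologically stable, $\Psi$ is $h^*(\mu)$-topologically stable.
   Context: $D[x]=\{y:(x,y)\in D\}$. $Act(G,X)$: maps $\Phi:G\times X\to X$ with each $\Phi_g$ a uniform equivalence, $\Phi_e=\mathrm{id}$, $\Phi_{g_1g_2}=\Phi_{g_1}\circ\Phi_{g_2}$. Generating sets are finite symmetric. For a measure $\nu$ and action $\Phi$ on a uniform space $Z$: $\Phi$ is $\nu$-expansive if there is a closed entourage $D$ with $\nu(\Gamma_D(x))=0$ for all $x$, where $\Gamma_D(x)=\{y:(\Phi_g(x),\Phi_g(y))\in D\ \forall g\}$. $\{x_g\}$ is a $D$-pseudo orbit (w.r.t. $S$) if $(x_{sg},\Phi_s(x_g))\in D$ for all $s\in S,g$; through $B$ if $x_e\in B$; $E$-shadowed by $x$ if $(x_g,\Phi_g(x))\in E$ for all $g$.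 $\nu$-shadowing: for some $S$, for every entourage $E$ there are an entourage $D$ and measurable $B$ with $\nu(Z\setminus B)=0$ such that every $D$-pseudo orbit through $B$ is $E$-shadowed by some point. $\nu$-persistent: for some $S$, for every $E$ there are $D$ and measurable $B$, $\nu(Z\setminus B)=0$, such that whenever $\Psi'\in Act(G,Z)$ satisfies $(\Psi'_s(x),\Phi_s(x))\in D$ for all $x,s\in S$, for each $x\in B$ there is $y$ with $(\Psi'_g(x),\Phi_g(y))\in E$ for all $g$. For set-valued $H:Z\to\mathcal{P}(Z)$: $Dom(H)=\{x:H(x)\ne\emptyset\}$; $(Id,H)\in E$ means $H(x)\subset E[x]$ for all $x$; upper semi-continuous: for each $x\in Dom(H)$ and open $O\supset H(x)$ there is an entourage $D$ with $H(y)\subset O$ whenever $(x,y)\in D$. $\nu$-topologically stable: for some $S$, for every $E$ there is $D$ such that for every $\Psi'\in Act(G,Z)$ with $(\Psi'_s(x),\Phi_s(x))\in D$ for all $x,s\in S$ there is an upper semi-continuous compact-valued $H$ with measurable domain, $\nu(Z\setminus Dom(H))=0$, $\nu(H(x))=0$ for all $x$, $(Id,H)\in E$, and $\Phi_g(H(x))=H(\Psi'_g(x))$ for all $g,x$. *)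

theory Defs
  imports "HOL-Analysis.Analysis"
begin

(* Groups are written additively (type class group_add, not assumed commutative):
   g1 g2 of the paper is  g1 + g2,  e is 0. *)

definition entourage :: "('a::uniform_space \<times> 'a) set \<Rightarrow> bool" where
  "entourage E \<longleftrightarrow> eventually (\<lambda>p. p \<in> E) uniformity"

definition uniform_equiv :: "('a::uniform_space \<Rightarrow> 'b::uniform_space) \<Rightarrow> bool" where
  "uniform_equiv h \<longleftrightarrow> bij h \<and> uniformly_continuous_on UNIV h
      \<and> uniformly_continuous_on UNIV (inv h)"

(* the subgroup generated by S (S symmetric in our uses) *)
inductive_set gen_by :: "'g::group_add set \<Rightarrow> 'g set" for S where
  gen_zero: "0 \<in> gen_by S"
| gen_step: "s \<in> S \<Longrightarrow> g \<in> gen_by S \<Longrightarrow> s + g \<in> gen_by S"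

definition gen_set :: "'g::group_add set \<Rightarrow> bool" where
  "gen_set S \<longleftrightarrow> finite S \<and> uminus ` S = S \<and> gen_by S = UNIV"

definition fin_gen_group :: "'g::group_add itself \<Rightarrow> bool" where
  "fin_gen_group TYPE('g) \<longleftrightarrow> (\<exists>S::'g set. gen_set S)"

definition Act :: "('g::group_add \<Rightarrow> 'a::uniform_space \<Rightarrow> 'a) set" where
  "Act = {\<Phi>. (\<forall>g. uniform_equiv (\<Phi> g)) \<and> \<Phi> 0 = id
              \<and> (\<forall>g1 g2. \<Phi> (g1 + g2) = \<Phi> g1 \<circ> \<Phi> g2)}"

definition Gamma :: "('g \<Rightarrow> 'a \<Rightarrow> 'a) \<Rightarrow> ('a \<times> 'a) set \<Rightarrow> 'a \<Rightarrow> 'a set" where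
  "Gamma \<Phi> D x = {y. \<forall>g. (\<Phi> g x, \<Phi> g y) \<in> D}"

definition expansive_meas ::
    "'a::uniform_space measure \<Rightarrow> ('g::group_add \<Rightarrow> 'a \<Rightarrow> 'a) \<Rightarrow> bool" where
  "expansive_meas \<nu> \<Phi> \<longleftrightarrow>
     (\<exists>D. entourage D \<and> closed D \<and> (\<forall>x. emeasure \<nu> (Gamma \<Phi> D x) = 0))"

definition pseudo_orbit ::
    "('g::group_add \<Rightarrow> 'a \<Rightarrow> 'a) \<Rightarrow> 'g set \<Rightarrow> ('a \<times> 'a) set \<Rightarrow> ('g \<Rightarrow> 'a) \<Rightarrow> bool" where
  "pseudo_orbit \<Phi> S D xs \<longleftrightarrow> (\<forall>s\<in>S. \<forall>g. (xs (s + g), \<Phi> s (xs g)) \<in> D)"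

definition shadowed ::
    "('g::group_add \<Rightarrow> 'a \<Rightarrow> 'a) \<Rightarrow> ('a \<times> 'a) set \<Rightarrow> ('g \<Rightarrow> 'a) \<Rightarrow> 'a \<Rightarrow> bool" where
  "shadowed \<Phi> E xs x \<longleftrightarrow> (\<forall>g. (xs g, \<Phi> g x) \<in> E)"

definition full_meas_set :: "'a measure \<Rightarrow> 'a set \<Rightarrow> bool" where
  "full_meas_set \<nu> B \<longleftrightarrow> B \<in> sets \<nu> \<and> emeasure \<nu> (space \<nu> - B) = 0"

definition shadowing_meas ::
    "'a::uniform_space measure \<Rightarrow> ('g::group_add \<Rightarrow> 'a \<Rightarrow> 'a) \<Rightarrow> bool" where
  "shadowing_meas \<nu> \<Phi> \<longleftrightarrow> (\<exists>S. gen_set S \<and>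
     (\<forall>E. entourage E \<longrightarrow> (\<exists>D B. entourage D \<and> full_meas_set \<nu> B \<and>
        (\<forall>xs. pseudo_orbit \<Phi> S D xs \<and> xs 0 \<in> B \<longrightarrow> (\<exists>x. shadowed \<Phi> E xs x)))))"

definition persistent_meas ::
    "'a::uniform_space measure \<Rightarrow> ('g::group_add \<Rightarrow> 'a \<Rightarrow> 'a) \<Rightarrow> bool" where
  "persistent_meas \<nu> \<Phi> \<longleftrightarrow> (\<exists>S. gen_set S \<and>
     (\<forall>E. entourage E \<longrightarrow> (\<exists>D B. entourage D \<and> full_meas_set \<nu> B \<and>
        (\<forall>\<Psi>' \<in> Act. (\<forall>x. \<forall>s\<in>S. (\<Psi>' s x, \<Phi> s x) \<in> D) \<longrightarrow>
           (\<forall>x\<in>B. \<exists>y. \<forall>g. (\<Psi>' g x, \<Phi> g y) \<in> E)))))"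

definition Dom :: "('a \<Rightarrow> 'b set) \<Rightarrow> 'a set" where
  "Dom H = {x. H x \<noteq> {}}"

definition usc :: "('a::uniform_space \<Rightarrow> 'a set) \<Rightarrow> bool" where
  "usc H \<longleftrightarrow> (\<forall>x\<in>Dom H. \<forall>U. open U \<and> H x \<subseteq> U \<longrightarrow>
      (\<exists>D. entourage D \<and> (\<forall>y. (x, y) \<in> D \<longrightarrow> H y \<subseteq> U)))"

definition top_stable_meas ::
    "'a::uniform_space measure \<Rightarrow> ('g::group_add \<Rightarrow> 'a \<Rightarrow> 'a) \<Rightarrow> bool" where
  "top_stable_meas \<nu> \<Phi> \<longleftrightarrow> (\<exists>S. gen_set S \<and>
     (\<forall>E. entourage E \<longrightarrow> (\<exists>D. entourage D \<and>
        (\<forall>\<Psi>' \<in> Act. (\<forall>x. \<forall>s\<in>S. (\<Psi>' s x, \<Phi> s x) \<in> D) \<longrightarrow>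
           (\<exists>H. usc H \<and> (\<forall>x. compact (H x)) \<and> Dom H \<in> sets \<nu>
              \<and> emeasure \<nu> (space \<nu> - Dom H) = 0
              \<and> (\<forall>x. emeasure \<nu> (H x) = 0)
              \<and> (\<forall>x. \<forall>y\<in>H x. (x, y) \<in> E)
              \<and> (\<forall>g x. \<Phi> g ` H x = H (\<Psi>' g x)))))))"

end

theory Submission
  imports Defs
begin

(* Entourages pull back
   along h and along inv h, which are uniformly continuous; since h is a Borel isomorphism,
   h maps null and full-measure sets of mu to null and full-measure sets of the push-forward
   measure. Pseudo-orbits and perturbations of Psi are turned by inv h into pseudo-orbits and
   perturbations of Phi, and the shadowing points, the sets Gamma and the set-valued maps H
   obtained for Phi are carried back by h. *)

lemma entourage_vimage_map_prod:
  assumes "uniformly_continuous_on UNIV f" and "entourage E"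
  shows "entourage (map_prod f f -` E)"
proof -
  have "\<forall>\<^sub>F (x, y) in uniformity. x \<in> UNIV \<longrightarrow> y \<in> UNIV \<longrightarrow> (f x, f y) \<in> E"
    using uniformly_continuous_onD[OF assms(1)] assms(2) unfolding entourage_def by blast
  then show ?thesis
    unfolding entourage_def by (rule eventually_mono) auto
qed

lemma closed_vimage_map_prod:
  assumes "continuous_on UNIV f" and "closed E"
  shows "closed (map_prod f f -` E)"
proof -
  have "continuous_on UNIV (map_prod f f)"
    unfolding map_prod_def case_prod_beta
    by (intro continuous_intros continuous_on_compose2[OF assms(1)]) auto
  then show ?thesis
    using continuous_on_closed_vimage[of UNIV "map_prod f f"] assms(2) by simp
qed

lemma uniform_equiv_inv:
  assumes "uniform_equiv h"
  shows "uniform_equiv (inv h)"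
  using assms unfolding uniform_equiv_def by (simp add: bij_imp_bij_inv inv_inv_eq)

lemma uniform_equiv_comp:
  assumes "uniform_equiv f" and "uniform_equiv g"
  shows "uniform_equiv (f \<circ> g)"
proof -
  have "bij f" "bij g" using assms unfolding uniform_equiv_def by auto
  then have "bij (f \<circ> g)" "inv (f \<circ> g) = inv g \<circ> inv f"
    by (simp_all add: bij_comp o_inv_distrib)
  moreover have "uniformly_continuous_on UNIV (f \<circ> g)"
    using uniformly_continuous_on_compose[of UNIV g f] assms \<open>bij g\<close>
    unfolding uniform_equiv_def by (simp add: bij_is_surj comp_def)
  moreover have "uniformly_continuous_on UNIV (inv g \<circ> inv f)"
    using uniformly_continuous_on_compose[of UNIV "inv f" "inv g"] assms \<open>bij f\<close>
    unfolding uniform_equiv_def by (simp add: bij_is_surj bij_imp_bij_inv comp_def)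
  ultimately show ?thesis
    unfolding uniform_equiv_def by simp
qed

lemma uniform_equiv_homeomorphism:
  assumes "uniform_equiv h"
  shows "homeomorphism UNIV UNIV h (inv h)"
  using assms unfolding uniform_equiv_def homeomorphism_def
  by (auto intro: uniformly_continuous_imp_continuous
      simp: bij_is_inj bij_is_surj surj_f_inv_f bij_imp_bij_inv)

lemma Act_conjugate:
  assumes "uniform_equiv h" and "\<Psi> \<in> Act"
  shows "(\<lambda>g. inv h \<circ> \<Psi> g \<circ> h) \<in> Act"
proof -
  have "inv h (h x) = x" "h (inv h y) = y" for x y
    using assms(1) uniform_equiv_homeomorphism homeomorphism_apply1 homeomorphism_apply2 by fastforce+
  moreover have "uniform_equiv (inv h \<circ> \<Psi> g \<circ> h)" for g
    using assms uniform_equiv_comp[OF uniform_equiv_comp[OF uniform_equiv_inv]]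
    unfolding Act_def by blast
  ultimately show ?thesis
    using assms(2) unfolding Act_def by (auto simp: fun_eq_iff)
qed

lemma usc_conjugate:
  assumes "uniform_equiv h" and "usc H"
  shows "usc (\<lambda>z. h ` H (inv h z))"
  unfolding usc_def
proof (intro ballI allI impI)
  fix z V assume z: "z \<in> Dom (\<lambda>z. h ` H (inv h z))" and V: "open V \<and> h ` H (inv h z) \<subseteq> V"
  have "continuous_on UNIV h"
    using assms(1) uniform_equiv_homeomorphism homeomorphism_cont1 by blast
  then have "open (h -` V)"
    using continuous_on_open_vimage[of UNIV h] V by simp
  moreover have "inv h z \<in> Dom H" "H (inv h z) \<subseteq> h -` V"
    using z V unfolding Dom_def by auto
  ultimately obtain D where "entourage D" and D: "\<forall>y. (inv h z, y) \<in> D \<longrightarrow> H y \<subseteq> h -` V"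
    using assms(2) unfolding usc_def by blast
  moreover have "uniformly_continuous_on UNIV (inv h)"
    using assms(1) unfolding uniform_equiv_def by simp
  ultimately show "\<exists>D. entourage D \<and> (\<forall>y. (z, y) \<in> D \<longrightarrow> h ` H (inv h y) \<subseteq> V)"
    using D entourage_vimage_map_prod by (intro exI[of _ "map_prod (inv h) (inv h) -` D"]) fastforce
qed

lemma sets_distr_homeomorphism_image:
  assumes "homeomorphism UNIV UNIV h k" and "sets \<mu> = sets borel"
  shows "h ` A \<in> sets (distr \<mu> borel h) \<longleftrightarrow> A \<in> sets \<mu>"
proof -
  have hk: "k (h x) = x" "h (k y) = y" for x y
    using assms(1) homeomorphism_apply1 homeomorphism_apply2 by blast+
  then have "inj h"
    by (metis injI)
  have "h ` A = k -` A"
  proof (intro equalityI subsetI)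
    show "x \<in> k -` A" if "x \<in> h ` A" for x
      using that hk by auto
    show "x \<in> h ` A" if "x \<in> k -` A" for x
      using that hk(2)[of x] by (metis image_eqI vimageE)
  qed
  moreover have "A = h -` (h ` A)"
    using \<open>inj h\<close> by (simp add: inj_vimage_image_eq)
  moreover have "k \<in> borel_measurable borel" "h \<in> borel_measurable borel"
    using assms(1) by (auto intro: borel_measurable_continuous_onI homeomorphism_cont1 homeomorphism_cont2)
  ultimately show ?thesis
    using assms(2) by (metis measurable_sets_borel sets_distr)
qed

lemma emeasure_distr_homeomorphism_image:
  assumes "homeomorphism UNIV UNIV h k" and "sets \<mu> = sets borel"
  shows "emeasure (distr \<mu> borel h) (h ` A) = emeasure \<mu> A"
proof (cases "A \<in> sets \<mu>")
  case True
  have "h \<in> measurable \<mu> borel"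
    using assms by (auto intro: borel_measurable_continuous_onI homeomorphism_cont1
        simp: measurable_cong_sets[OF assms(2) refl])
  moreover have "h -` (h ` A) \<inter> space \<mu> = A"
    using assms(1) sets.sets_into_space[OF True] homeomorphism_apply1
    by (metis UNIV_I inj_on_inverseI inj_vimage_image_eq inf.absorb1)
  ultimately show ?thesis
    using True sets_distr_homeomorphism_image[OF assms] by (simp add: emeasure_distr)
next
  case False
  then show ?thesis
    using sets_distr_homeomorphism_image[OF assms] by (simp add: emeasure_notin_sets)
qed

lemma full_meas_set_distr_homeomorphism_image:
  assumes "homeomorphism UNIV UNIV h k" and "sets \<mu> = sets borel" and "full_meas_set \<mu> B"
  shows "full_meas_set (distr \<mu> borel h) (h ` B)"
proof -
  have "bij h"
    using assms(1) homeomorphism_apply1 homeomorphism_apply2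
    by (metis o_bij id_apply comp_apply UNIV_I fun_eq_iff)
  moreover have "space \<mu> = UNIV"
    using sets_eq_imp_space_eq[OF assms(2)] by simp
  ultimately have "space (distr \<mu> borel h) - h ` B = h ` (space \<mu> - B)"
    by (simp add: bij_image_Compl_eq flip: Compl_eq_Diff_UNIV)
  then show ?thesis
    using assms(3) sets_distr_homeomorphism_image[OF assms(1,2)]
      emeasure_distr_homeomorphism_image[OF assms(1,2)]
    unfolding full_meas_set_def by metis
qed

definition stability_map ::
    "'a::uniform_space measure \<Rightarrow> ('a \<times> 'a) set \<Rightarrow> ('g \<Rightarrow> 'a \<Rightarrow> 'a) \<Rightarrow> ('g \<Rightarrow> 'a \<Rightarrow> 'a)
      \<Rightarrow> ('a \<Rightarrow> 'a set) \<Rightarrow> bool" where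
  "stability_map \<nu> E \<Phi> \<Psi> H \<longleftrightarrow> usc H \<and> (\<forall>x. compact (H x)) \<and> full_meas_set \<nu> (Dom H)
     \<and> (\<forall>x. emeasure \<nu> (H x) = 0) \<and> (\<forall>x. \<forall>y\<in>H x. (x, y) \<in> E) \<and> (\<forall>g x. \<Phi> g ` H x = H (\<Psi> g x))"

lemma top_stable_meas_iff_stability_map:
  "top_stable_meas \<nu> \<Phi> \<longleftrightarrow> (\<exists>S. gen_set S \<and> (\<forall>E. entourage E \<longrightarrow> (\<exists>D. entourage D \<and>
     (\<forall>\<Psi> \<in> Act. (\<forall>x. \<forall>s\<in>S. (\<Psi> s x, \<Phi> s x) \<in> D) \<longrightarrow> (\<exists>H. stability_map \<nu> E \<Phi> \<Psi> H)))))"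
  unfolding top_stable_meas_def stability_map_def full_meas_set_def by (simp add: conj_assoc)

locale uniform_conjugacy =
  fixes \<Phi> :: "'g::group_add \<Rightarrow> 'a::uniform_space \<Rightarrow> 'a"
    and \<Psi> :: "'g \<Rightarrow> 'b::uniform_space \<Rightarrow> 'b"
    and h :: "'a \<Rightarrow> 'b"
  assumes uniform_equiv_h: "uniform_equiv h"
    and conjugacy: "\<And>g. h \<circ> \<Phi> g = \<Psi> g \<circ> h"
begin

lemma homeomorphism_h: "homeomorphism UNIV UNIV h (inv h)"
  using uniform_equiv_homeomorphism[OF uniform_equiv_h] .

lemma inv_h_h [simp]: "inv h (h x) = x"
  and h_inv_h [simp]: "h (inv h y) = y"
  using homeomorphism_h unfolding homeomorphism_def by auto

lemma h_Phi [simp]: "h (\<Phi> g x) = \<Psi> g (h x)"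
  using conjugacy by (metis comp_apply)

lemma inv_h_Psi [simp]: "inv h (\<Psi> g y) = \<Phi> g (inv h y)"
  by (metis h_Phi h_inv_h inv_h_h)

lemma entourage_vimage_h:
  "entourage E \<Longrightarrow> entourage (map_prod h h -` E)"
  using entourage_vimage_map_prod uniform_equiv_h unfolding uniform_equiv_def by blast

lemma entourage_vimage_inv_h:
  "entourage D \<Longrightarrow> entourage (map_prod (inv h) (inv h) -` D)"
  using entourage_vimage_map_prod uniform_equiv_h unfolding uniform_equiv_def by blast

lemma pseudo_orbit_conjugate:
  "pseudo_orbit \<Psi> S (map_prod (inv h) (inv h) -` D) ys \<Longrightarrow> pseudo_orbit \<Phi> S D (inv h \<circ> ys)"
  unfolding pseudo_orbit_def by simp

lemma shadowed_conjugate: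
  "shadowed \<Phi> (map_prod h h -` E) (inv h \<circ> ys) x \<Longrightarrow> shadowed \<Psi> E ys (h x)"
  unfolding shadowed_def by simp

lemma Gamma_conjugate:
  "Gamma \<Psi> (map_prod (inv h) (inv h) -` D) y = h ` Gamma \<Phi> D (inv h y)"
  unfolding Gamma_def by (auto intro: image_eqI[of _ h "inv h _"])

lemma perturbation_conjugate:
  assumes "\<forall>x. \<forall>s\<in>S. (\<Psi>' s x, \<Psi> s x) \<in> map_prod (inv h) (inv h) -` D"
  shows "\<forall>x. \<forall>s\<in>S. ((inv h \<circ> \<Psi>' s \<circ> h) x, \<Phi> s x) \<in> D"
proof (intro allI ballI)
  fix x s assume "s \<in> S"
  then have "(\<Psi>' s (h x), \<Psi> s (h x)) \<in> map_prod (inv h) (inv h) -` D"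
    using assms by blast
  then show "((inv h \<circ> \<Psi>' s \<circ> h) x, \<Phi> s x) \<in> D"
    by simp
qed

lemma shadowing_meas_conjugate:
  assumes "sets \<mu> = sets borel" and "shadowing_meas \<mu> \<Phi>"
  shows "shadowing_meas (distr \<mu> borel h) \<Psi>"
proof -
  obtain S where "gen_set S" and shadowing: "\<And>E. entourage E \<Longrightarrow> \<exists>D B. entourage D \<and> full_meas_set \<mu> B \<and>
      (\<forall>xs. pseudo_orbit \<Phi> S D xs \<and> xs 0 \<in> B \<longrightarrow> (\<exists>x. shadowed \<Phi> E xs x))"
    using assms(2) unfolding shadowing_meas_def by blast
  have "\<exists>D B. entourage D \<and> full_meas_set (distr \<mu> borel h) B \<and>
      (\<forall>ys. pseudo_orbit \<Psi> S D ys \<and> ys 0 \<in> B \<longrightarrow> (\<exists>y. shadowed \<Psi> E ys y))"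
    if E: "entourage E" for E
  proof -
    obtain D B where "entourage D" "full_meas_set \<mu> B" and shadow:
      "\<And>xs. pseudo_orbit \<Phi> S D xs \<Longrightarrow> xs 0 \<in> B \<Longrightarrow> \<exists>x. shadowed \<Phi> (map_prod h h -` E) xs x"
      using shadowing[OF entourage_vimage_h[OF E]] by blast
    have "\<exists>y. shadowed \<Psi> E ys y"
      if ys: "pseudo_orbit \<Psi> S (map_prod (inv h) (inv h) -` D) ys" "ys 0 \<in> h ` B" for ys
    proof -
      obtain x where "shadowed \<Phi> (map_prod h h -` E) (inv h \<circ> ys) x"
        using shadow[OF pseudo_orbit_conjugate[OF ys(1)]] ys(2) by auto
      then show ?thesis
        using shadowed_conjugate by blast
    qed
    then show ?thesis
      using \<open>entourage D\<close> \<open>full_meas_set \<mu> B\<close> entourage_vimage_inv_h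
        full_meas_set_distr_homeomorphism_image[OF homeomorphism_h assms(1)] by blast
  qed
  then show ?thesis
    using \<open>gen_set S\<close> unfolding shadowing_meas_def by blast
qed

lemma expansive_meas_conjugate:
  assumes "sets \<mu> = sets borel" and "expansive_meas \<mu> \<Phi>"
  shows "expansive_meas (distr \<mu> borel h) \<Psi>"
proof -
  obtain D where "entourage D" "closed D" and null: "\<And>x. emeasure \<mu> (Gamma \<Phi> D x) = 0"
    using assms(2) unfolding expansive_meas_def by blast
  have "closed (map_prod (inv h) (inv h) -` D)"
    using closed_vimage_map_prod homeomorphism_cont2[OF homeomorphism_h] \<open>closed D\<close> by blast
  moreover have "emeasure (distr \<mu> borel h) (Gamma \<Psi> (map_prod (inv h) (inv h) -` D) y) = 0" for y
    using null by (simp add: Gamma_conjugate emeasure_distr_homeomorphism_image[OF homeomorphism_h assms(1)])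
  ultimately show ?thesis
    using entourage_vimage_inv_h[OF \<open>entourage D\<close>] unfolding expansive_meas_def by blast
qed

lemma persistent_meas_conjugate:
  assumes "sets \<mu> = sets borel" and "persistent_meas \<mu> \<Phi>"
  shows "persistent_meas (distr \<mu> borel h) \<Psi>"
proof -
  obtain S where "gen_set S" and persistence: "\<And>E. entourage E \<Longrightarrow> \<exists>D B. entourage D \<and> full_meas_set \<mu> B \<and>
      (\<forall>\<Phi>' \<in> Act. (\<forall>x. \<forall>s\<in>S. (\<Phi>' s x, \<Phi> s x) \<in> D) \<longrightarrow> (\<forall>x\<in>B. \<exists>y. \<forall>g. (\<Phi>' g x, \<Phi> g y) \<in> E))"
    using assms(2) unfolding persistent_meas_def by blast
  have "\<exists>D B. entourage D \<and> full_meas_set (distr \<mu> borel h) B \<and>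
      (\<forall>\<Psi>' \<in> Act. (\<forall>x. \<forall>s\<in>S. (\<Psi>' s x, \<Psi> s x) \<in> D) \<longrightarrow> (\<forall>x\<in>B. \<exists>y. \<forall>g. (\<Psi>' g x, \<Psi> g y) \<in> E))"
    if E: "entourage E" for E
  proof -
    obtain D B where "entourage D" "full_meas_set \<mu> B" and persist:
      "\<And>\<Phi>'. \<Phi>' \<in> Act \<Longrightarrow> \<forall>x. \<forall>s\<in>S. (\<Phi>' s x, \<Phi> s x) \<in> D \<Longrightarrow>
         \<forall>x\<in>B. \<exists>y. \<forall>g. (\<Phi>' g x, \<Phi> g y) \<in> map_prod h h -` E"
      using persistence[OF entourage_vimage_h[OF E]] by blast
    have "\<exists>y. \<forall>g. (\<Psi>' g z, \<Psi> g y) \<in> E"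
      if \<Psi>': "\<Psi>' \<in> Act" "\<forall>x. \<forall>s\<in>S. (\<Psi>' s x, \<Psi> s x) \<in> map_prod (inv h) (inv h) -` D"
        and z: "z \<in> h ` B" for \<Psi>' z
    proof -
      obtain y where "\<forall>g. ((inv h \<circ> \<Psi>' g \<circ> h) (inv h z), \<Phi> g y) \<in> map_prod h h -` E"
        using persist[OF Act_conjugate[OF uniform_equiv_h \<Psi>'(1)] perturbation_conjugate[OF \<Psi>'(2)]] z
        by auto
      then show ?thesis
        by (intro exI[of _ "h y"]) simp
    qed
    then show ?thesis
      using \<open>entourage D\<close> \<open>full_meas_set \<mu> B\<close> entourage_vimage_inv_h
        full_meas_set_distr_homeomorphism_image[OF homeomorphism_h assms(1)] by blast
  qed
  then show ?thesis
    using \<open>gen_set S\<close> unfolding persistent_meas_def by blast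
qed

lemma Dom_conjugate: "Dom (\<lambda>z. h ` H (inv h z)) = h ` Dom H"
  unfolding Dom_def by (auto intro: image_eqI[of _ h "inv h _"])

lemma stability_map_conjugate:
  assumes "sets \<mu> = sets borel"
    and "stability_map \<mu> (map_prod h h -` E) \<Phi> (\<lambda>g. inv h \<circ> \<Psi>' g \<circ> h) H"
  shows "stability_map (distr \<mu> borel h) E \<Psi> \<Psi>' (\<lambda>z. h ` H (inv h z))"
proof -
  have "usc H" and compact: "\<And>x. compact (H x)" and "full_meas_set \<mu> (Dom H)"
    and null: "\<And>x. emeasure \<mu> (H x) = 0" and close: "\<And>x y. y \<in> H x \<Longrightarrow> (h x, h y) \<in> E"
    and equivariant: "\<And>g x. \<Phi> g ` H x = H (inv h (\<Psi>' g (h x)))"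
    using assms(2) unfolding stability_map_def by auto
  have "compact (h ` H (inv h z))" for z
    using compact_continuous_image[OF continuous_on_subset[OF homeomorphism_cont1[OF homeomorphism_h]] compact]
    by blast
  moreover have "emeasure (distr \<mu> borel h) (h ` H (inv h z)) = 0" for z
    using null by (simp add: emeasure_distr_homeomorphism_image[OF homeomorphism_h assms(1)])
  moreover have "(z, w) \<in> E" if "w \<in> h ` H (inv h z)" for z w
    using that close[of _ "inv h z"] by auto
  moreover have "\<Psi> g ` h ` H (inv h z) = h ` H (inv h (\<Psi>' g z))" for g z
  proof -
    have "\<Psi> g ` h ` H (inv h z) = h ` \<Phi> g ` H (inv h z)"
      unfolding image_image by simp
    then show ?thesis
      unfolding equivariant by simp
  qed
  ultimately show ?thesis
    unfolding stability_map_def Dom_conjugate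
    using usc_conjugate[OF uniform_equiv_h \<open>usc H\<close>]
      full_meas_set_distr_homeomorphism_image[OF homeomorphism_h assms(1) \<open>full_meas_set \<mu> (Dom H)\<close>]
    by blast
qed

lemma top_stable_meas_conjugate:
  assumes "sets \<mu> = sets borel" and "top_stable_meas \<mu> \<Phi>"
  shows "top_stable_meas (distr \<mu> borel h) \<Psi>"
proof -
  obtain S where "gen_set S" and stability: "\<And>E. entourage E \<Longrightarrow> \<exists>D. entourage D \<and>
      (\<forall>\<Phi>' \<in> Act. (\<forall>x. \<forall>s\<in>S. (\<Phi>' s x, \<Phi> s x) \<in> D) \<longrightarrow> (\<exists>H. stability_map \<mu> E \<Phi> \<Phi>' H))"
    using assms(2) unfolding top_stable_meas_iff_stability_map by blast
  have "\<exists>D. entourage D \<and> (\<forall>\<Psi>' \<in> Act. (\<forall>x. \<forall>s\<in>S. (\<Psi>' s x, \<Psi> s x) \<in> D) \<longrightarrow>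
      (\<exists>H. stability_map (distr \<mu> borel h) E \<Psi> \<Psi>' H))"
    if E: "entourage E" for E
  proof -
    obtain D where "entourage D" and stable: "\<And>\<Phi>'. \<Phi>' \<in> Act \<Longrightarrow> \<forall>x. \<forall>s\<in>S. (\<Phi>' s x, \<Phi> s x) \<in> D \<Longrightarrow>
        \<exists>H. stability_map \<mu> (map_prod h h -` E) \<Phi> \<Phi>' H"
      using stability[OF entourage_vimage_h[OF E]] by blast
    have "\<exists>H. stability_map (distr \<mu> borel h) E \<Psi> \<Psi>' H"
      if \<Psi>': "\<Psi>' \<in> Act" "\<forall>x. \<forall>s\<in>S. (\<Psi>' s x, \<Psi> s x) \<in> map_prod (inv h) (inv h) -` D" for \<Psi>'
      using stable[OF Act_conjugate[OF uniform_equiv_h \<Psi>'(1)] perturbation_conjugate[OF \<Psi>'(2)]]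
        stability_map_conjugate[OF assms(1)] by blast
    then show ?thesis
      using \<open>entourage D\<close> entourage_vimage_inv_h by blast
  qed
  then show ?thesis
    using \<open>gen_set S\<close> unfolding top_stable_meas_iff_stability_map by blast
qed

end

theorem proposition4p2:
  fixes \<Phi> :: "'g::group_add \<Rightarrow> 'a::uniform_space \<Rightarrow> 'a"
    and \<Psi> :: "'g \<Rightarrow> 'b::uniform_space \<Rightarrow> 'b"
    and h :: "'a \<Rightarrow> 'b"
    and \<mu> :: "'a measure"
  assumes "fin_gen_group TYPE('g)"
    and "sets \<mu> = sets borel"
    and "\<Phi> \<in> Act" and "\<Psi> \<in> Act"
    and "uniform_equiv h"
    and "\<forall>g. h \<circ> \<Phi> g = \<Psi> g \<circ> h"
  shows "(shadowing_meas \<mu> \<Phi> \<longrightarrow> shadowing_meas (distr \<mu> borel h) \<Psi>)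
       \<and> (expansive_meas \<mu> \<Phi> \<longrightarrow> expansive_meas (distr \<mu> borel h) \<Psi>)
       \<and> (persistent_meas \<mu> \<Phi> \<longrightarrow> persistent_meas (distr \<mu> borel h) \<Psi>)
       \<and> (top_stable_meas \<mu> \<Phi> \<longrightarrow> top_stable_meas (distr \<mu> borel h) \<Psi>)"
proof -
  interpret uniform_conjugacy \<Phi> \<Psi> h
    using assms(5,6) by unfold_locales auto
  show ?thesis
    using assms(2) shadowing_meas_conjugate expansive_meas_conjugate
      persistent_meas_conjugate top_stable_meas_conjugate by blast
qed

end
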